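(* Consider an unweighted ESP instance on $G=(V,E)$, $|V|=n$, root $r$, and let $L^*$ be the minimum total latency of a feasible expanding search pattern. For each $k\in\{1,\dots,n\}$ let $T_k$ be the tree returned by Garg's 2-approximation algorithm for the rooted $k$-MST problem (a subtree of $G$ containing $r$ with exactly $k$ vertices whose length $\ell(T_k)=\sum_{e\in E(T_k)}\ell_e$ is at most twice the minimum length of such a tree), where $T_1=(\{r\},\emptyset)$. Let $H$ be the directed graph with vertex set $\{1,\dots,n\}$, arcs $(i,j)$ for all $i<j$, and arc costs $c_{i,j}=(n-i)\,\ell(T_j)$. Then a shortest $(1,n)$-path in $H$ has cost at most $2eL^*$.
   Context: Unweighted ESP: connected undirected graph $G=(V,E)$, root $r\in V$, edge lengths $\ell_e\in\mathbb{Z}_{>0}$, all vertex weights $w_v=1$. An expanding search pattern is a sequence of edges $\sigma=(e_1,\dots,e_m)$ with $r\in e_1$ such that $\{e_1,\dots,e_i\}$ forms a tree in $G$ for every $i$; it is feasible if it visits every vertex. For $v\ne r$, $k_v=\min\{i:v\in e_i\}$, $k_r=0$, latency $L_v(\sigma)=\sum_{i=1}^{k_v}\ell_{e_i}$; total latency $L(\sigma)=\sum_{v\in V}L_v(\sigma)$. The cost of a path in $H$ is the sum of its arc costs. *)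

theory Defs
  imports Complex_Main
begin

definition simple_graph :: "'a set \<Rightarrow> 'a set set \<Rightarrow> bool" where
  "simple_graph V E \<longleftrightarrow> finite V \<and> (\<forall>e\<in>E. e \<subseteq> V \<and> card e = 2)"

definition adj :: "'a set set \<Rightarrow> 'a \<Rightarrow> 'a \<Rightarrow> bool" where
  "adj F u v \<longleftrightarrow> {u, v} \<in> F"

definition connected_on :: "'a set \<Rightarrow> 'a set set \<Rightarrow> bool" where
  "connected_on W F \<longleftrightarrow> (\<forall>u\<in>W. \<forall>v\<in>W. (adj F)\<^sup>*\<^sup>* u v)"

definition is_tree :: "'a set \<Rightarrow> 'a set set \<Rightarrow> bool" where
  "is_tree W F \<longleftrightarrow> finite W \<and> W \<noteq> {} \<and> (\<forall>e\<in>F. e \<subseteq> W \<and> card e = 2)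
      \<and> connected_on W F \<and> card W = card F + 1"

definition edges_form_tree :: "'a set set \<Rightarrow> bool" where
  "edges_form_tree F \<longleftrightarrow> finite F \<and> is_tree (\<Union>F) F"

definition rooted_subtree :: "'a set \<Rightarrow> 'a set set \<Rightarrow> 'a \<Rightarrow> 'a set \<Rightarrow> 'a set set \<Rightarrow> bool" where
  "rooted_subtree V E r W F \<longleftrightarrow> W \<subseteq> V \<and> F \<subseteq> E \<and> r \<in> W \<and> is_tree W F"

definition tree_length :: "('a set \<Rightarrow> nat) \<Rightarrow> 'a set set \<Rightarrow> nat" where
  "tree_length len F = (\<Sum>e\<in>F. len e)"

definition kmst_opt :: "'a set \<Rightarrow> 'a set set \<Rightarrow> 'a \<Rightarrow> ('a set \<Rightarrow> nat) \<Rightarrow> nat \<Rightarrow> nat" where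
  "kmst_opt V E r len k = Min {tree_length len F | W F. rooted_subtree V E r W F \<and> card W = k}"

definition expanding_pattern :: "'a set set \<Rightarrow> 'a \<Rightarrow> 'a set list \<Rightarrow> bool" where
  "expanding_pattern E r \<sigma> \<longleftrightarrow> set \<sigma> \<subseteq> E \<and> distinct \<sigma>
     \<and> (\<sigma> \<noteq> [] \<longrightarrow> r \<in> hd \<sigma>)
     \<and> (\<forall>i\<in>{1..length \<sigma>}. edges_form_tree (set (take i \<sigma>)))"

definition feasible_pattern :: "'a set \<Rightarrow> 'a set set \<Rightarrow> 'a \<Rightarrow> 'a set list \<Rightarrow> bool" where
  "feasible_pattern V E r \<sigma> \<longleftrightarrow> expanding_pattern E r \<sigma> \<and> V \<subseteq> insert r (\<Union>(set \<sigma>))"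

text \<open>Latency of v: sum of the lengths of e_1..e_{k_v}, k_v the first (1-based) index
  with v in e_{k_v}; k_r = 0.\<close>
definition vertex_latency :: "('a set \<Rightarrow> nat) \<Rightarrow> 'a \<Rightarrow> 'a set list \<Rightarrow> 'a \<Rightarrow> nat" where
  "vertex_latency len r \<sigma> v =
     (if v = r then 0
      else sum_list (map len (take (LEAST k. 1 \<le> k \<and> k \<le> length \<sigma> \<and> v \<in> \<sigma> ! (k - 1)) \<sigma>)))"

definition total_latency :: "'a set \<Rightarrow> ('a set \<Rightarrow> nat) \<Rightarrow> 'a \<Rightarrow> 'a set list \<Rightarrow> nat" where
  "total_latency V len r \<sigma> = (\<Sum>v\<in>V. vertex_latency len r \<sigma> v)"

definition opt_latency :: "'a set \<Rightarrow> 'a set set \<Rightarrow> ('a set \<Rightarrow> nat) \<Rightarrow> 'a \<Rightarrow> nat" where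
  "opt_latency V E len r = Min {total_latency V len r \<sigma> | \<sigma>. feasible_pattern V E r \<sigma>}"

text \<open>A (1,n)-path in H is a strictly increasing list of vertices starting at 1 and ending at n.\<close>
definition H_path :: "nat \<Rightarrow> nat list \<Rightarrow> bool" where
  "H_path n ps \<longleftrightarrow> ps \<noteq> [] \<and> hd ps = 1 \<and> last ps = n \<and> sorted_wrt (<) ps"

definition H_path_cost :: "(nat \<Rightarrow> nat \<Rightarrow> nat) \<Rightarrow> nat list \<Rightarrow> nat" where
  "H_path_cost c ps = sum_list (map (\<lambda>(i, j). c i j) (zip ps (tl ps)))"

definition shortest_H_path :: "nat \<Rightarrow> (nat \<Rightarrow> nat \<Rightarrow> nat) \<Rightarrow> nat" where
  "shortest_H_path n c = Min {H_path_cost c ps | ps. H_path n ps}"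

end

theory Submission
  imports Defs
begin

text \<open>
  Fix an optimal pattern \<open>\<sigma>\<close> and let \<open>t k\<close> be the length of its first \<open>k - 1\<close> edges.
  The total latency of \<open>\<sigma>\<close> is the sum of the \<open>t k\<close> over \<open>2 \<le> k \<le> n\<close>, and the first
  \<open>k - 1\<close> edges of \<open>\<sigma>\<close> form a rooted tree on \<open>k\<close> vertices, so \<open>tree_length (T k) \<le> 2 t k\<close>.
  It therefore suffices to find a path in H of cost at most \<open>e\<close> times that sum when the arc
  \<open>(i, j)\<close> costs \<open>(n - i) t j\<close>. Doubling: stop at the last index whose value lies below each of
  the thresholds \<open>b \<beta>\<^sup>q\<^sup>+\<^sup>N\<^sup>m\<close>, \<open>m = 0, 1, \<dots>\<close>, where \<open>\<beta> = e\<^sup>1\<^sup>/\<^sup>N\<close> and \<open>q < N\<close> is an offset.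
  Writing \<open>n - i\<close> as the number of \<open>k > i\<close>, the arc into a stop \<open>j\<close> is charged \<open>t j\<close> by every
  \<open>k\<close> beyond the previous stop. The stops charging \<open>k\<close> sit on distinct thresholds, all below
  \<open>e \<beta> t k\<close>; over all \<open>N\<close> offsets these thresholds form one geometric series of ratio \<open>\<beta>\<close>,
  of sum at most \<open>N e \<beta> t k\<close>. Hence some offset yields a path of cost at most \<open>e \<beta>\<close> times
  the sum of the \<open>t k\<close>, and \<open>N \<rightarrow> \<infinity>\<close> gives the factor \<open>e\<close>.
\<close>

section \<open>Paths in H through a set of stops\<close>

definition prev :: "'a::linorder set \<Rightarrow> 'a \<Rightarrow> 'a" where
  "prev S j = Max {i \<in> S. i < j}"

lemma
  assumes "finite S" "i \<in> S" "i < j"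
  shows prev_in: "prev S j \<in> S"
    and prev_less: "prev S j < j"
    and le_prev: "i \<le> prev S j"
proof -
  have "finite {i \<in> S. i < j}" "i \<in> {i \<in> S. i < j}"
    using assms by auto
  then show "prev S j \<in> S" "prev S j < j" "i \<le> prev S j"
    unfolding prev_def using Max_in[of "{i \<in> S. i < j}"] Max_ge by blast+
qed

lemma prev_insert_below:
  assumes "finite S" "a < b" "b \<in> S" "b < j"
  shows "prev (insert a S) j = prev S j"
proof -
  have eq: "{i \<in> insert a S. i < j} = insert a {i \<in> S. i < j}"
    using assms by auto
  have "b \<in> {i \<in> S. i < j}"
    using assms by simp
  then have "prev (insert a S) j = max a (prev S j)"
    unfolding prev_def eq using assms(1) by (intro Max_insert) auto
  moreover have "b \<le> prev S j"
    using assms by (intro le_prev)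
  ultimately show ?thesis
    using assms(2) by simp
qed

lemma sorted_hd_le: "sorted xs \<Longrightarrow> x \<in> set xs \<Longrightarrow> hd xs \<le> x"
  by (cases xs) auto

lemma sorted_le_last: "sorted xs \<Longrightarrow> x \<in> set xs \<Longrightarrow> x \<le> last xs"
  by (induction xs) auto

lemma sum_consecutive_pairs_eq_sum_prev:
  fixes f :: "'a::linorder \<Rightarrow> 'a \<Rightarrow> 'b::comm_monoid_add"
  assumes "sorted_wrt (<) xs" "xs \<noteq> []"
  shows "(\<Sum>(i, j)\<leftarrow>zip xs (tl xs). f i j) = (\<Sum>j\<in>set xs - {hd xs}. f (prev (set xs) j) j)"
  using assms
proof (induction xs)
  case Nil
  then show ?case by simp
next
  case (Cons a ys)
  show ?case
  proof (cases ys)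
    case Nil
    then show ?thesis by simp
  next
    case ys: (Cons b zs)
    have sorted: "sorted_wrt (<) ys" and ab: "a < b" "\<forall>z\<in>set zs. a < z \<and> b < z"
      using Cons.prems ys by auto
    have "{i \<in> set (a # ys). i < b} = {a}"
      using ab ys by auto
    then have prev_b: "prev (set (a # ys)) b = a"
      by (simp add: prev_def)
    have prev_zs: "prev (set (a # ys)) j = prev (set ys) j" if "j \<in> set zs" for j
      using prev_insert_below[of "set ys" a b j] ab that ys by simp
    have b_notin: "b \<notin> set zs"
      using sorted ys by auto
    have "(\<Sum>(i, j)\<leftarrow>zip (a # ys) (tl (a # ys)). f i j)
        = f a b + (\<Sum>(i, j)\<leftarrow>zip ys (tl ys). f i j)"
      using ys by simp
    also have "\<dots> = f a b + (\<Sum>j\<in>set zs. f (prev (set ys) j) j)"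
      using Cons.IH[OF sorted] ys b_notin by simp
    also have "\<dots> = (\<Sum>j\<in>insert b (set zs). f (prev (set (a # ys)) j) j)"
      using b_notin prev_b prev_zs by simp
    also have "insert b (set zs) = set (a # ys) - {hd (a # ys)}"
      using ab ys by auto
    finally show ?thesis .
  qed
qed

lemma H_path_subset: "H_path n ps \<Longrightarrow> set ps \<subseteq> {1..n}"
  unfolding H_path_def
  using sorted_hd_le sorted_le_last strict_sorted_imp_sorted by fastforce

lemma finite_H_paths: "finite {ps. H_path n ps}"
proof -
  have "set ps \<subseteq> {1..n} \<and> length ps \<le> n" if "H_path n ps" for ps
  proof -
    have sub: "set ps \<subseteq> {1..n}"
      using H_path_subset[OF that] .
    moreover have "distinct ps"
      using that unfolding H_path_def by (simp add: strict_sorted_iff)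
    ultimately show ?thesis
      using card_mono[OF _ sub] by (simp add: distinct_card)
  qed
  then show ?thesis
    by (intro finite_subset[OF _ finite_lists_length_le[of "{1..n}" n]]) auto
qed

lemma shortest_H_path_le: "H_path n ps \<Longrightarrow> shortest_H_path n c \<le> H_path_cost c ps"
  unfolding shortest_H_path_def
  using finite_H_paths[of n] by (intro Min_le) auto

lemma
  assumes "S \<subseteq> {1..n}" "1 \<in> S" "n \<in> S"
  shows H_path_sorted_list_of_set: "H_path n (sorted_list_of_set S)"
    and H_path_cost_sorted_list_of_set:
      "H_path_cost c (sorted_list_of_set S) = (\<Sum>j\<in>S - {1}. c (prev S j) j)"
proof -
  let ?ps = "sorted_list_of_set S"
  have fin: "finite S"
    using assms(1) finite_subset by blast
  then have set: "set ?ps = S" and sorted: "sorted_wrt (<) ?ps"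
    by simp_all
  then have ne: "?ps \<noteq> []"
    using assms(2) by auto
  have "hd ?ps = 1"
    using assms sorted_hd_le[of ?ps] hd_in_set[OF ne] set by fastforce
  moreover have "last ?ps = n"
    using assms sorted_le_last[of ?ps] last_in_set[OF ne] set by fastforce
  ultimately show "H_path n ?ps"
    unfolding H_path_def using ne sorted by simp
  show "H_path_cost c ?ps = (\<Sum>j\<in>S - {1}. c (prev S j) j)"
    unfolding H_path_cost_def sum_consecutive_pairs_eq_sum_prev[OF sorted ne]
    using set \<open>hd ?ps = 1\<close> by simp
qed

section \<open>Geometric breakpoints\<close>

lemma sum_mult_card_greater:
  fixes g :: "'a \<Rightarrow> 'b::comm_semiring_1"
  assumes "finite A" "\<And>j. j \<in> A \<Longrightarrow> 1 \<le> p j"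
  shows "(\<Sum>j\<in>A. of_nat (n - p j) * g j) = (\<Sum>k\<in>{2..n}. \<Sum>j\<in>{j \<in> A. p j < k}. g j)"
proof -
  have "(\<Sum>j\<in>A. of_nat (n - p j) * g j) = (\<Sum>j\<in>A. \<Sum>k\<in>{2..n}. if p j < k then g j else 0)"
  proof (rule sum.cong[OF refl])
    fix j assume "j \<in> A"
    then have "{k \<in> {2..n}. p j < k} = {p j<..n}"
      using assms(2)[of j] by auto
    then have "(\<Sum>k\<in>{2..n}. if p j < k then g j else 0) = (\<Sum>k\<in>{p j<..n}. g j)"
      by (simp flip: sum.inter_filter)
    then show "of_nat (n - p j) * g j = (\<Sum>k\<in>{2..n}. if p j < k then g j else 0)"
      by simp
  qed
  also have "\<dots> = (\<Sum>k\<in>{2..n}. \<Sum>j\<in>A. if p j < k then g j else 0)"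
    by (rule sum.swap)
  also have "\<dots> = (\<Sum>k\<in>{2..n}. \<Sum>j\<in>{j \<in> A. p j < k}. g j)"
    using assms(1) by (simp add: sum.inter_filter)
  finally show ?thesis .
qed

lemma sum_mod_classes:
  fixes g :: "nat \<Rightarrow> 'b::comm_monoid_add"
  assumes "0 < N"
  shows "(\<Sum>q<N. \<Sum>p\<in>{p. p < M \<and> p mod N = q}. g p) = (\<Sum>p<M. g p)"
proof -
  have "(\<Sum>q<N. \<Sum>p\<in>{p. p < M \<and> p mod N = q}. g p)
      = (\<Sum>q<N. \<Sum>p<M. if p mod N = q then g p else 0)"
    by (auto simp: sum.inter_filter[symmetric] intro!: sum.cong)
  also have "\<dots> = (\<Sum>p<M. \<Sum>q<N. if p mod N = q then g p else 0)"
    by (rule sum.swap)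
  also have "\<dots> = (\<Sum>p<M. g p)"
    using assms by (simp add: sum.delta)
  finally show ?thesis .
qed

lemma exists_le_of_sum_le:
  fixes f :: "nat \<Rightarrow> real"
  assumes "0 < N" "(\<Sum>q<N. f q) \<le> real N * B"
  shows "\<exists>q<N. f q \<le> B"
proof (rule ccontr)
  assume "\<not> (\<exists>q<N. f q \<le> B)"
  then have "(\<Sum>q<N. B) < (\<Sum>q<N. f q)"
    using assms(1) by (intro sum_strict_mono) auto
  with assms(2) show False
    by simp
qed

lemma le_exp_one_mult_if_le_for_all_N:
  fixes x a :: real
  assumes "\<And>N. 0 < N \<Longrightarrow> x \<le> exp (1 + 1 / real N) * a"
  shows "x \<le> exp 1 * a"
proof -
  have "(\<lambda>N. exp (1 + 1 / real N) * a) \<longlonglongrightarrow> exp (1 + 0) * a"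
    by (intro tendsto_intros lim_inverse_n')
  then have lim: "(\<lambda>N. exp (1 + 1 / real N) * a) \<longlonglongrightarrow> exp 1 * a"
    by simp
  show ?thesis
    using assms by (intro LIMSEQ_le_const[OF lim]) (auto intro!: exI[of _ 1])
qed

text \<open>
  The \<open>N\<close> offsets \<open>q\<close> derandomize the uniformly random offset of the doubling argument.
  Any positive \<open>base\<close> below \<open>t 2\<close> would do.
\<close>

locale geometric_breakpoints =
  fixes n N :: nat and t :: "nat \<Rightarrow> real"
  assumes two_le_n: "2 \<le> n" and N_pos: "0 < N"
    and t_mono: "\<And>i j. 1 \<le> i \<Longrightarrow> i \<le> j \<Longrightarrow> j \<le> n \<Longrightarrow> t i \<le> t j"
    and t_pos: "\<And>k. 2 \<le> k \<Longrightarrow> k \<le> n \<Longrightarrow> 0 < t k"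
begin

definition \<beta> :: real where
  "\<beta> = exp (1 / real N)"

definition base :: real where
  "base = t 2 / 2"

definition threshold :: "nat \<Rightarrow> nat \<Rightarrow> real" where
  "threshold q m = base * \<beta> ^ (q + N * m)"

definition breakpoint :: "nat \<Rightarrow> nat \<Rightarrow> nat" where
  "breakpoint q m = Max (insert 1 {j \<in> {1..n}. t j \<le> threshold q m})"

definition stops :: "nat \<Rightarrow> nat set" where
  "stops q = {1, n} \<union> range (breakpoint q)"

definition level :: "nat \<Rightarrow> nat \<Rightarrow> nat" where
  "level q j = (LEAST m. t j \<le> threshold q m)"

definition rank :: "nat \<Rightarrow> nat" where
  "rank k = (LEAST p. t k \<le> base * \<beta> ^ p)"

lemma base_pos: "0 < base"
  using t_pos[of 2] two_le_n by (simp add: base_def)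

lemma base_less: "2 \<le> k \<Longrightarrow> k \<le> n \<Longrightarrow> base < t k"
  using t_mono[of 2 k] t_pos[of 2] by (simp add: base_def)

lemma one_less_\<beta>: "1 < \<beta>"
  using N_pos by (simp add: \<beta>_def)

lemma \<beta>_power_N_mult: "\<beta> ^ (N * m) = exp (real m)"
  using N_pos by (simp add: \<beta>_def power_mult flip: exp_of_nat_mult)

lemma exists_geometric_ge: "\<exists>m. x \<le> base * \<beta> ^ (q + N * m)"
proof -
  obtain m :: nat where "x / base \<le> m"
    using real_arch_simple by blast
  then have "x \<le> base * m"
    using base_pos by (simp add: pos_divide_le_eq mult.commute)
  also have "real m \<le> exp (real m)"
    using exp_ge_add_one_self[of "real m"] by linarith
  also have "exp (real m) = \<beta> ^ (N * m)"
    by (simp add: \<beta>_power_N_mult)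
  also have "\<dots> \<le> \<beta> ^ (q + N * m)"
    using one_less_\<beta> by (intro power_increasing) auto
  finally show ?thesis
    using base_pos by auto
qed

lemma le_threshold_level: "t j \<le> threshold q (level q j)"
proof -
  have "\<exists>m. t j \<le> threshold q m"
    unfolding threshold_def by (rule exists_geometric_ge)
  then show ?thesis
    unfolding level_def by (rule LeastI_ex)
qed

lemma level_le: "t j \<le> threshold q m \<Longrightarrow> level q j \<le> m"
  unfolding level_def by (rule Least_le)

lemma threshold_mono: "m \<le> m' \<Longrightarrow> threshold q m \<le> threshold q m'"
  unfolding threshold_def using one_less_\<beta> base_pos by (auto intro!: power_increasing)

lemma le_rank: "t k \<le> base * \<beta> ^ rank k"
proof -
  obtain m where "t k \<le> base * \<beta> ^ (0 + N * m)"
    using exists_geometric_ge by blast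
  then have "\<exists>p. t k \<le> base * \<beta> ^ p"
    by auto
  then show ?thesis
    unfolding rank_def by (rule LeastI_ex)
qed

lemma rank_tight:
  assumes "2 \<le> k" "k \<le> n"
  shows "base * \<beta> ^ rank k \<le> \<beta> * t k"
proof -
  obtain p where p: "rank k = Suc p"
    using le_rank[of k] base_less[OF assms] by (cases "rank k") auto
  then have "\<not> t k \<le> base * \<beta> ^ p"
    using not_less_Least[of p "\<lambda>p. t k \<le> base * \<beta> ^ p"] unfolding rank_def by auto
  then have "\<beta> * (base * \<beta> ^ p) \<le> \<beta> * t k"
    using one_less_\<beta> by simp
  then show ?thesis
    using p by (simp add: mult.left_commute)
qed

lemma breakpoint_mem: "breakpoint q m \<in> insert 1 {j \<in> {1..n}. t j \<le> threshold q m}"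
  unfolding breakpoint_def by (rule Max_in) auto

lemma le_breakpoint: "j \<in> {1..n} \<Longrightarrow> t j \<le> threshold q m \<Longrightarrow> j \<le> breakpoint q m"
  unfolding breakpoint_def by (rule Max_ge) auto

lemma breakpoint_range: "breakpoint q m \<in> {1..n}"
  using breakpoint_mem[of q m] two_le_n by auto

lemma stops_subset: "stops q \<subseteq> {1..n}"
  using breakpoint_range two_le_n unfolding stops_def by auto

lemma finite_stops: "finite (stops q)"
  using stops_subset finite_subset by blast

lemma one_in_stops: "1 \<in> stops q" and n_in_stops: "n \<in> stops q"
  unfolding stops_def by auto

lemma prev_stops:
  assumes "j \<in> stops q" "j \<noteq> 1"
  shows "prev (stops q) j \<in> stops q" "1 \<le> prev (stops q) j" "prev (stops q) j < j"
    and "\<And>i. i \<in> stops q \<Longrightarrow> i < j \<Longrightarrow> i \<le> prev (stops q) j"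
proof -
  have "1 \<le> j"
    using assms(1) stops_subset[of q] by auto
  with assms(2) have "1 < j"
    by simp
  then show "prev (stops q) j \<in> stops q" "prev (stops q) j < j" "1 \<le> prev (stops q) j"
    using prev_in[OF finite_stops one_in_stops] prev_less[OF finite_stops one_in_stops]
      le_prev[OF finite_stops one_in_stops] by auto
  show "\<And>i. i \<in> stops q \<Longrightarrow> i < j \<Longrightarrow> i \<le> prev (stops q) j"
    using le_prev[OF finite_stops] by auto
qed

lemma level_strict_mono:
  assumes "j \<in> stops q" "j' \<in> stops q" "1 < j" "j < j'"
  shows "level q j < level q j'"
proof -
  have "j \<noteq> n"
    using assms stops_subset[of q] by auto
  then obtain m where m: "j = breakpoint q m"
    using assms(1,3) unfolding stops_def by auto
  have "t j \<le> threshold q m"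
    using breakpoint_mem[of q m] m assms(3) by auto
  then have "level q j \<le> m"
    by (rule level_le)
  moreover have "m < level q j'"
  proof (rule ccontr)
    assume "\<not> m < level q j'"
    then have "t j' \<le> threshold q m"
      using le_threshold_level[of j' q] threshold_mono[of "level q j'" m q] by simp
    moreover have "j' \<in> {1..n}"
      using assms(2) stops_subset[of q] by auto
    ultimately have "j' \<le> j"
      using le_breakpoint m by blast
    with assms(4) show False
      by simp
  qed
  ultimately show ?thesis
    by simp
qed

lemma level_less_rank:
  assumes q: "q < N" and j: "j \<in> stops q" "j \<noteq> 1" and k: "prev (stops q) j < k" "k \<le> n"
  shows "q + N * level q j < rank k + N"
proof (cases "level q j")
  case 0
  then show ?thesis
    using q by simp
next
  case (Suc m)
  have t_j: "\<not> t j \<le> threshold q m"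
    using level_le[of j q m] Suc by auto
  have "j \<in> {1..n}"
    using j(1) stops_subset[of q] by auto
  have "breakpoint q m < j"
  proof (rule ccontr)
    assume "\<not> breakpoint q m < j"
    then have "t j \<le> t (breakpoint q m)"
      using t_mono breakpoint_range[of q m] \<open>j \<in> {1..n}\<close> by auto
    moreover have "t (breakpoint q m) \<le> threshold q m"
      using breakpoint_mem[of q m] \<open>\<not> breakpoint q m < j\<close> \<open>j \<in> {1..n}\<close> j(2) by auto
    ultimately show False
      using t_j by simp
  qed
  moreover have "breakpoint q m \<in> stops q"
    unfolding stops_def by auto
  ultimately have "breakpoint q m < k"
    using prev_stops(4)[OF j] k(1) by force
  moreover have "k \<in> {1..n}"
    using prev_stops(2)[OF j] k by auto
  ultimately have "threshold q m < t k"
    using le_breakpoint[of k q m] by force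
  also have "\<dots> \<le> base * \<beta> ^ rank k"
    by (rule le_rank)
  finally have "\<beta> ^ (q + N * m) < \<beta> ^ rank k"
    using base_pos unfolding threshold_def by simp
  then have "q + N * m < rank k"
    using power_less_imp_less_exp one_less_\<beta> by blast
  then show ?thesis
    using Suc by simp
qed

lemma sum_stops_before_le:
  assumes q: "q < N" and k: "k \<in> {2..n}"
  shows "(\<Sum>j\<in>{j \<in> stops q - {1}. prev (stops q) j < k}. t j)
    \<le> (\<Sum>p\<in>{p. p < rank k + N \<and> p mod N = q}. base * \<beta> ^ p)"
proof -
  define A where "A = {j \<in> stops q - {1}. prev (stops q) j < k}"
  define e where "e j = q + N * level q j" for j
  have "inj_on e A"
  proof (rule inj_onI)
    fix x y assume x: "x \<in> A" and y: "y \<in> A" and "e x = e y"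
    then have "level q x = level q y"
      using N_pos by (simp add: e_def)
    moreover have "x \<in> stops q" "y \<in> stops q" "1 < x" "1 < y"
      using x y stops_subset[of q] unfolding A_def by fastforce+
    ultimately show "x = y"
      using level_strict_mono[of x q y] level_strict_mono[of y q x] by (cases x y rule: linorder_cases) auto
  qed
  have "(\<Sum>j\<in>A. t j) \<le> (\<Sum>j\<in>A. base * \<beta> ^ e j)"
    using le_threshold_level unfolding threshold_def e_def by (intro sum_mono) blast
  also have "\<dots> = (\<Sum>p\<in>e ` A. base * \<beta> ^ p)"
    using \<open>inj_on e A\<close> by (simp add: sum.reindex)
  also have "\<dots> \<le> (\<Sum>p\<in>{p. p < rank k + N \<and> p mod N = q}. base * \<beta> ^ p)"
  proof (rule sum_mono2)
    show "e ` A \<subseteq> {p. p < rank k + N \<and> p mod N = q}"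
      using level_less_rank[OF q] q k unfolding A_def e_def by auto
    show "0 \<le> base * \<beta> ^ p" for p
      using base_pos one_less_\<beta> by simp
  qed simp
  finally show ?thesis
    unfolding A_def .
qed

lemma cost_of_stops_le:
  assumes "q < N"
  shows "(\<Sum>j\<in>stops q - {1}. real (n - prev (stops q) j) * t j)
    \<le> (\<Sum>k\<in>{2..n}. \<Sum>p\<in>{p. p < rank k + N \<and> p mod N = q}. base * \<beta> ^ p)"
proof -
  have "(\<Sum>j\<in>stops q - {1}. real (n - prev (stops q) j) * t j)
      = (\<Sum>k\<in>{2..n}. \<Sum>j\<in>{j \<in> stops q - {1}. prev (stops q) j < k}. t j)"
    using finite_stops prev_stops(2) by (intro sum_mult_card_greater) auto
  also have "\<dots> \<le> (\<Sum>k\<in>{2..n}. \<Sum>p\<in>{p. p < rank k + N \<and> p mod N = q}. base * \<beta> ^ p)"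
    using sum_stops_before_le[OF assms] by (rule sum_mono)
  finally show ?thesis .
qed

lemma geometric_sum_le:
  assumes k: "2 \<le> k" "k \<le> n"
  shows "(\<Sum>p<rank k + N. base * \<beta> ^ p) \<le> exp 1 * \<beta> * real N * t k"
proof -
  have "1 / (\<beta> - 1) \<le> real N"
  proof -
    have "1 + 1 / real N \<le> \<beta>"
      unfolding \<beta>_def by (rule exp_ge_add_one_self)
    then show ?thesis
      using N_pos one_less_\<beta> by (simp add: divide_simps algebra_simps)
  qed
  have "(\<Sum>p<rank k + N. base * \<beta> ^ p) = base * ((\<beta> ^ (rank k + N) - 1) / (\<beta> - 1))"
    using one_less_\<beta> by (simp add: sum_distrib_left[symmetric] sum_gp_strict divide_simps)
      (simp add: algebra_simps)
  also have "\<dots> \<le> base * (\<beta> ^ (rank k + N) / (\<beta> - 1))"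
    using base_pos one_less_\<beta> by (intro mult_left_mono divide_right_mono) auto
  also have "\<dots> = (base * \<beta> ^ rank k) * exp 1 * (1 / (\<beta> - 1))"
    using \<beta>_power_N_mult[of 1] by (simp add: power_add)
  also have "\<dots> \<le> (\<beta> * t k) * exp 1 * (1 / (\<beta> - 1))"
    using rank_tight[OF k] one_less_\<beta> by (intro mult_right_mono) auto
  also have "\<dots> \<le> (\<beta> * t k) * exp 1 * real N"
    using \<open>1 / (\<beta> - 1) \<le> real N\<close> one_less_\<beta> t_pos[OF k] by (intro mult_left_mono) auto
  finally show ?thesis
    by (simp add: mult_ac)
qed

lemma exists_cheap_stops:
  "\<exists>q<N. (\<Sum>j\<in>stops q - {1}. real (n - prev (stops q) j) * t j)
      \<le> exp (1 + 1 / real N) * (\<Sum>k\<in>{2..n}. t k)"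
proof (rule exists_le_of_sum_le[OF N_pos])
  have "(\<Sum>q<N. \<Sum>j\<in>stops q - {1}. real (n - prev (stops q) j) * t j)
      \<le> (\<Sum>q<N. \<Sum>k\<in>{2..n}. \<Sum>p\<in>{p. p < rank k + N \<and> p mod N = q}. base * \<beta> ^ p)"
    using cost_of_stops_le by (intro sum_mono) auto
  also have "\<dots> = (\<Sum>k\<in>{2..n}. \<Sum>p<rank k + N. base * \<beta> ^ p)"
    by (subst sum.swap) (simp only: sum_mod_classes[OF N_pos])
  also have "\<dots> \<le> (\<Sum>k\<in>{2..n}. exp 1 * \<beta> * real N * t k)"
    using geometric_sum_le by (intro sum_mono) auto
  also have "\<dots> = real N * (exp (1 + 1 / real N) * (\<Sum>k\<in>{2..n}. t k))"
    by (simp add: \<beta>_def exp_add sum_distrib_left mult_ac)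
  finally show "(\<Sum>q<N. \<Sum>j\<in>stops q - {1}. real (n - prev (stops q) j) * t j)
      \<le> real N * (exp (1 + 1 / real N) * (\<Sum>k\<in>{2..n}. t k))" .
qed

end

lemma exists_H_path_cost_le:
  fixes t :: "nat \<Rightarrow> real" and C :: "nat \<Rightarrow> nat \<Rightarrow> nat"
  assumes "1 \<le> n" "0 < N"
    and "\<And>i j. 1 \<le> i \<Longrightarrow> i \<le> j \<Longrightarrow> j \<le> n \<Longrightarrow> t i \<le> t j"
    and "\<And>k. 2 \<le> k \<Longrightarrow> k \<le> n \<Longrightarrow> 0 < t k"
    and C_le: "\<And>i j. 1 \<le> i \<Longrightarrow> i < j \<Longrightarrow> j \<le> n \<Longrightarrow> real (C i j) \<le> real (n - i) * t j"
  shows "\<exists>ps. H_path n ps \<and> real (H_path_cost C ps) \<le> exp (1 + 1 / real N) * (\<Sum>k\<in>{2..n}. t k)"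
proof (cases "n = 1")
  case True
  then have "H_path n [1]" "H_path_cost C [1] = 0"
    by (simp_all add: H_path_def H_path_cost_def)
  with True show ?thesis
    by auto
next
  case False
  then interpret geometric_breakpoints n N t
    using assms by unfold_locales auto
  obtain q where "q < N" and q: "(\<Sum>j\<in>stops q - {1}. real (n - prev (stops q) j) * t j)
      \<le> exp (1 + 1 / real N) * (\<Sum>k\<in>{2..n}. t k)"
    using exists_cheap_stops by blast
  let ?ps = "sorted_list_of_set (stops q)"
  have "real (H_path_cost C ?ps) = (\<Sum>j\<in>stops q - {1}. real (C (prev (stops q) j) j))"
    using H_path_cost_sorted_list_of_set[OF stops_subset one_in_stops n_in_stops] by simp
  also have "\<dots> \<le> (\<Sum>j\<in>stops q - {1}. real (n - prev (stops q) j) * t j)"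
  proof (rule sum_mono)
    fix j assume "j \<in> stops q - {1}"
    then show "real (C (prev (stops q) j) j) \<le> real (n - prev (stops q) j) * t j"
      using C_le prev_stops(2,3)[of j q] stops_subset[of q] by auto
  qed
  also note q
  finally show ?thesis
    using H_path_sorted_list_of_set[OF stops_subset one_in_stops n_in_stops, of q] by blast
qed

section \<open>Expanding search patterns\<close>

lemma symp_rtranclp_adj: "symp (adj F)\<^sup>*\<^sup>*"
  by (rule symp_rtranclp) (auto simp: symp_def adj_def insert_commute)

lemma rtranclp_adj_mono: "(adj F)\<^sup>*\<^sup>* u v \<Longrightarrow> F \<subseteq> F' \<Longrightarrow> (adj F')\<^sup>*\<^sup>* u v"
  unfolding adj_def by (induction rule: rtranclp_induct) (auto intro: rtranclp.rtrancl_into_rtrancl)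

lemma rtranclp_adj_crossing:
  "(adj F)\<^sup>*\<^sup>* u v \<Longrightarrow> u \<in> A \<Longrightarrow> v \<notin> A \<Longrightarrow> \<exists>x y. {x, y} \<in> F \<and> x \<in> A \<and> y \<notin> A"
  by (induction rule: rtranclp_induct) (auto simp: adj_def)

lemma connected_onI_reach:
  assumes "\<And>w. w \<in> W \<Longrightarrow> (adj F)\<^sup>*\<^sup>* x w"
  shows "connected_on W F"
  unfolding connected_on_def
  using assms symp_rtranclp_adj[of F] by (meson rtranclp_trans sympD)

lemma is_tree_singleton: "is_tree {r} {}"
  by (simp add: is_tree_def connected_on_def)

lemma is_tree_insert_leaf:
  assumes tree: "is_tree W F" and "x \<in> W" "y \<notin> W"
  shows "is_tree (insert y W) (insert {x, y} F)"
  unfolding is_tree_def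
proof (intro conjI)
  have fin: "finite W" and edges: "\<forall>e\<in>F. e \<subseteq> W \<and> card e = 2"
    and conn: "connected_on W F" and card: "card W = card F + 1"
    using tree unfolding is_tree_def by auto
  have "x \<noteq> y" "{x, y} \<notin> F"
    using assms edges by auto
  have "finite F"
    using edges fin by (meson Pow_iff finite_Pow_iff finite_subset subsetI)
  show "finite (insert y W)" "insert y W \<noteq> {}"
    using fin by simp_all
  show "\<forall>e\<in>insert {x, y} F. e \<subseteq> insert y W \<and> card e = 2"
    using edges \<open>x \<in> W\<close> \<open>x \<noteq> y\<close> by auto
  show "card (insert y W) = card (insert {x, y} F) + 1"
    using card fin \<open>finite F\<close> \<open>{x, y} \<notin> F\<close> \<open>y \<notin> W\<close> by simp
  show "connected_on (insert y W) (insert {x, y} F)"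
  proof (rule connected_onI_reach)
    fix w assume "w \<in> insert y W"
    show "(adj (insert {x, y} F))\<^sup>*\<^sup>* x w"
    proof (cases "w = y")
      case True
      then show ?thesis
        by (simp add: adj_def r_into_rtranclp)
    next
      case False
      then have "(adj F)\<^sup>*\<^sup>* x w"
        using conn \<open>x \<in> W\<close> \<open>w \<in> insert y W\<close> unfolding connected_on_def by auto
      then show ?thesis
        by (rule rtranclp_adj_mono) auto
    qed
  qed
qed

definition visited :: "'a \<Rightarrow> 'a set list \<Rightarrow> nat \<Rightarrow> 'a set" where
  "visited r \<sigma> i = insert r (\<Union>(set (take i \<sigma>)))"

definition prefix_length :: "('a set \<Rightarrow> nat) \<Rightarrow> 'a set list \<Rightarrow> nat \<Rightarrow> nat" where
  "prefix_length len \<sigma> i = sum_list (map len (take i \<sigma>))"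

lemma prefix_length_mono: "i \<le> j \<Longrightarrow> prefix_length len \<sigma> i \<le> prefix_length len \<sigma> j"
  unfolding prefix_length_def by (metis le_add_diff_inverse take_add map_append sum_list_append le_add1)

lemma prefix_length_pos:
  "\<sigma> \<noteq> [] \<Longrightarrow> 0 < len (hd \<sigma>) \<Longrightarrow> 0 < i \<Longrightarrow> 0 < prefix_length len \<sigma> i"
  unfolding prefix_length_def by (cases \<sigma>; cases i) auto

lemma expanding_patternD:
  assumes "expanding_pattern E r \<sigma>"
  shows "set \<sigma> \<subseteq> E" "distinct \<sigma>" "\<sigma> \<noteq> [] \<Longrightarrow> r \<in> hd \<sigma>"
    and "1 \<le> i \<Longrightarrow> i \<le> length \<sigma> \<Longrightarrow> edges_form_tree (set (take i \<sigma>))"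
  using assms unfolding expanding_pattern_def by auto

lemma expanding_pattern_prefix_tree:
  assumes pattern: "expanding_pattern E r \<sigma>" and "i \<le> length \<sigma>"
  shows "is_tree (visited r \<sigma> i) (set (take i \<sigma>))"
proof (cases "i = 0")
  case True
  then show ?thesis
    by (simp add: visited_def is_tree_singleton)
next
  case False
  then have "\<sigma> \<noteq> []"
    using assms(2) by auto
  then have "hd \<sigma> \<in> set (take i \<sigma>)"
    using False by (cases \<sigma>; cases i) auto
  then have "visited r \<sigma> i = \<Union>(set (take i \<sigma>))"
    using expanding_patternD(3)[OF pattern \<open>\<sigma> \<noteq> []\<close>] unfolding visited_def by blast
  moreover have "edges_form_tree (set (take i \<sigma>))"
    using expanding_patternD(4)[OF pattern] False assms(2) by simp
  ultimately show ?thesis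
    unfolding edges_form_tree_def by simp
qed

lemma
  assumes pattern: "expanding_pattern E r \<sigma>" and "i \<le> length \<sigma>"
  shows finite_visited: "finite (visited r \<sigma> i)"
    and card_visited: "card (visited r \<sigma> i) = i + 1"
proof -
  have "card (set (take i \<sigma>)) = i"
    using expanding_patternD(2)[OF pattern] assms(2) by (simp add: distinct_card)
  then show "finite (visited r \<sigma> i)" "card (visited r \<sigma> i) = i + 1"
    using expanding_pattern_prefix_tree[OF assms] unfolding is_tree_def by simp_all
qed

lemma expanding_pattern_snoc:
  assumes pattern: "expanding_pattern E r \<sigma>" and "{x, y} \<in> E"
    and x: "x \<in> visited r \<sigma> (length \<sigma>)" and y: "y \<notin> visited r \<sigma> (length \<sigma>)"
  shows "expanding_pattern E r (\<sigma> @ [{x, y}])"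
  unfolding expanding_pattern_def
proof (intro conjI ballI impI)
  note facts = expanding_patternD[OF pattern]
  show r: "r \<in> hd (\<sigma> @ [{x, y}])"
    using facts(3) x unfolding visited_def by (cases \<sigma>) auto
  show "set (\<sigma> @ [{x, y}]) \<subseteq> E"
    using facts(1) assms(2) by simp
  show "distinct (\<sigma> @ [{x, y}])"
    using facts(2) y unfolding visited_def by auto
  fix i assume i: "i \<in> {1..length (\<sigma> @ [{x, y}])}"
  show "edges_form_tree (set (take i (\<sigma> @ [{x, y}])))"
  proof (cases "i \<le> length \<sigma>")
    case True
    then show ?thesis
      using facts(4) i by simp
  next
    case False
    then have "set (take i (\<sigma> @ [{x, y}])) = insert {x, y} (set \<sigma>)"
      using i by simp
    moreover have "\<Union>(insert {x, y} (set \<sigma>)) = insert y (visited r \<sigma> (length \<sigma>))"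
      using r hd_in_set[of "\<sigma> @ [{x, y}]"] x unfolding visited_def by auto
    moreover have "is_tree (insert y (visited r \<sigma> (length \<sigma>))) (insert {x, y} (set \<sigma>))"
      using is_tree_insert_leaf expanding_pattern_prefix_tree[OF pattern order_refl] x y
      by simp
    moreover have "finite (insert {x, y} (set \<sigma>))"
      by simp
    ultimately show ?thesis
      unfolding edges_form_tree_def by simp
  qed
qed

lemma finite_edges:
  assumes "simple_graph V E"
  shows "finite E"
proof (rule finite_subset)
  show "E \<subseteq> Pow V" "finite (Pow V)"
    using assms unfolding simple_graph_def by auto
qed

lemma visited_subset:
  assumes "simple_graph V E" "r \<in> V" "expanding_pattern E r \<sigma>"
  shows "visited r \<sigma> i \<subseteq> V"
proof -
  have "set (take i \<sigma>) \<subseteq> E"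
    using expanding_patternD(1)[OF assms(3)] by (rule order_trans[OF set_take_subset])
  moreover have "\<forall>e\<in>E. e \<subseteq> V"
    using assms(1) unfolding simple_graph_def by simp
  ultimately show ?thesis
    using assms(2) unfolding visited_def by auto
qed

lemma exists_expanding_pattern:
  assumes graph: "simple_graph V E" and root: "r \<in> V" and conn: "connected_on V E"
  shows "m < card V \<Longrightarrow> \<exists>\<sigma>. expanding_pattern E r \<sigma> \<and> length \<sigma> = m"
proof (induction m)
  case 0
  have "expanding_pattern E r []"
    by (simp add: expanding_pattern_def)
  then show ?case
    by blast
next
  case (Suc m)
  then obtain \<sigma> where pattern: "expanding_pattern E r \<sigma>" and "length \<sigma> = m"
    by auto
  let ?W = "visited r \<sigma> m"
  have "card ?W < card V"
    using card_visited[OF pattern] Suc.prems \<open>length \<sigma> = m\<close> by simp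
  have "\<not> V \<subseteq> ?W"
  proof
    assume "V \<subseteq> ?W"
    then have "card V \<le> card ?W"
      using finite_visited[OF pattern, of m] \<open>length \<sigma> = m\<close> by (intro card_mono) auto
    with \<open>card ?W < card V\<close> show False
      by simp
  qed
  then obtain v where "v \<in> V" "v \<notin> ?W"
    by auto
  have "(adj E)\<^sup>*\<^sup>* r v"
    using conn root \<open>v \<in> V\<close> unfolding connected_on_def by simp
  moreover have "r \<in> ?W"
    unfolding visited_def by simp
  ultimately have "\<exists>x y. {x, y} \<in> E \<and> x \<in> ?W \<and> y \<notin> ?W"
    using \<open>v \<notin> ?W\<close> by (rule rtranclp_adj_crossing)
  then obtain x y where "{x, y} \<in> E" "x \<in> ?W" "y \<notin> ?W"
    by blast
  then have "expanding_pattern E r (\<sigma> @ [{x, y}])"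
    using expanding_pattern_snoc[OF pattern] \<open>length \<sigma> = m\<close> by simp
  then show ?case
    using \<open>length \<sigma> = m\<close> by (intro exI[of _ "\<sigma> @ [{x, y}]"]) simp
qed

lemma
  assumes graph: "simple_graph V E" and root: "r \<in> V" and feasible: "feasible_pattern V E r \<sigma>"
  shows visited_feasible_pattern: "visited r \<sigma> (length \<sigma>) = V"
    and length_feasible_pattern: "length \<sigma> = card V - 1"
proof -
  have pattern: "expanding_pattern E r \<sigma>"
    using feasible unfolding feasible_pattern_def by simp
  have "visited r \<sigma> (length \<sigma>) \<subseteq> V"
    by (rule visited_subset[OF graph root pattern])
  moreover have "V \<subseteq> visited r \<sigma> (length \<sigma>)"
    using feasible unfolding feasible_pattern_def visited_def by simp
  ultimately show "visited r \<sigma> (length \<sigma>) = V"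
    by (rule antisym)
  then show "length \<sigma> = card V - 1"
    using card_visited[OF pattern order_refl] by simp
qed

lemma exists_feasible_pattern:
  assumes graph: "simple_graph V E" and root: "r \<in> V" and conn: "connected_on V E"
  shows "\<exists>\<sigma>. feasible_pattern V E r \<sigma>"
proof -
  have "finite V"
    using graph unfolding simple_graph_def by simp
  then have "card V - 1 < card V"
    using root card_gt_0_iff by (metis diff_less empty_iff zero_less_one)
  then obtain \<sigma> where pattern: "expanding_pattern E r \<sigma>" and "length \<sigma> = card V - 1"
    using exists_expanding_pattern[OF assms] by blast
  then have "card (visited r \<sigma> (length \<sigma>)) = card V"
    using card_visited[OF pattern order_refl] \<open>card V - 1 < card V\<close> by simp
  then have "visited r \<sigma> (length \<sigma>) = V"
    using card_subset_eq[OF \<open>finite V\<close> visited_subset[OF graph root pattern]] by simp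
  then show ?thesis
    using pattern unfolding feasible_pattern_def visited_def by auto
qed

lemma kmst_opt_le_prefix_length:
  assumes graph: "simple_graph V E" and root: "r \<in> V" and feasible: "feasible_pattern V E r \<sigma>"
    and k: "1 \<le> k" "k \<le> card V"
  shows "kmst_opt V E r len k \<le> prefix_length len \<sigma> (k - 1)"
proof -
  have pattern: "expanding_pattern E r \<sigma>"
    using feasible unfolding feasible_pattern_def by simp
  have "k - 1 \<le> length \<sigma>"
    using length_feasible_pattern[OF assms(1-3)] k by simp
  let ?W = "visited r \<sigma> (k - 1)" and ?F = "set (take (k - 1) \<sigma>)"
  have "rooted_subtree V E r ?W ?F"
    unfolding rooted_subtree_def
    using visited_subset[OF graph root pattern] expanding_pattern_prefix_tree[OF pattern]
      expanding_patternD(1)[OF pattern] set_take_subset[of "k - 1" \<sigma>] \<open>k - 1 \<le> length \<sigma>\<close>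
    by (auto simp: visited_def)
  moreover have "card ?W = k"
    using card_visited[OF pattern \<open>k - 1 \<le> length \<sigma>\<close>] k by simp
  moreover have "tree_length len ?F = prefix_length len \<sigma> (k - 1)"
    using expanding_patternD(2)[OF pattern]
    unfolding tree_length_def prefix_length_def by (simp add: sum_list_distinct_conv_sum_set)
  moreover have "finite {tree_length len F | W F. rooted_subtree V E r W F \<and> card W = k}"
  proof (rule finite_subset)
    show "{tree_length len F | W F. rooted_subtree V E r W F \<and> card W = k}
        \<subseteq> tree_length len ` Pow E"
      unfolding rooted_subtree_def by auto
    show "finite (tree_length len ` Pow E)"
      using finite_edges[OF graph] by simp
  qed
  ultimately show ?thesis
    unfolding kmst_opt_def by (metis (mono_tags, lifting) Min_le mem_Collect_eq)
qed

definition first_visit :: "'a set list \<Rightarrow> 'a \<Rightarrow> nat" where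
  "first_visit \<sigma> v = (LEAST k. 1 \<le> k \<and> k \<le> length \<sigma> \<and> v \<in> \<sigma> ! (k - 1))"

lemma vertex_latency_eq_prefix_length:
  "v \<noteq> r \<Longrightarrow> vertex_latency len r \<sigma> v = prefix_length len \<sigma> (first_visit \<sigma> v)"
  unfolding vertex_latency_def prefix_length_def first_visit_def by simp

lemma first_visit_spec:
  assumes "v \<in> \<Union>(set \<sigma>)"
  shows "1 \<le> first_visit \<sigma> v" "first_visit \<sigma> v \<le> length \<sigma>" "v \<in> \<sigma> ! (first_visit \<sigma> v - 1)"
    and "v \<notin> \<Union>(set (take (first_visit \<sigma> v - 1) \<sigma>))"
proof -
  let ?P = "\<lambda>k. 1 \<le> k \<and> k \<le> length \<sigma> \<and> v \<in> \<sigma> ! (k - 1)"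
  obtain i where "i < length \<sigma>" "v \<in> \<sigma> ! i"
    using assms by (auto simp: in_set_conv_nth)
  then have "?P (Suc i)"
    by simp
  then have "?P (first_visit \<sigma> v)"
    unfolding first_visit_def by (rule LeastI)
  then show "1 \<le> first_visit \<sigma> v" "first_visit \<sigma> v \<le> length \<sigma>" "v \<in> \<sigma> ! (first_visit \<sigma> v - 1)"
    by auto
  show "v \<notin> \<Union>(set (take (first_visit \<sigma> v - 1) \<sigma>))"
  proof
    assume "v \<in> \<Union>(set (take (first_visit \<sigma> v - 1) \<sigma>))"
    then obtain j where "j < first_visit \<sigma> v - 1" "j < length \<sigma>" "v \<in> \<sigma> ! j"
      by (auto simp: in_set_conv_nth)
    then have "?P (Suc j)"
      by simp
    then have "first_visit \<sigma> v \<le> Suc j"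
      unfolding first_visit_def by (rule Least_le)
    with \<open>j < first_visit \<sigma> v - 1\<close> show False
      by simp
  qed
qed

lemma inj_on_first_visit:
  assumes pattern: "expanding_pattern E r \<sigma>"
  shows "inj_on (first_visit \<sigma>) (\<Union>(set \<sigma>) - {r})"
proof (rule inj_onI)
  fix u v assume u: "u \<in> \<Union>(set \<sigma>) - {r}" and v: "v \<in> \<Union>(set \<sigma>) - {r}"
    and same: "first_visit \<sigma> u = first_visit \<sigma> v"
  define m where "m = first_visit \<sigma> u"
  have m: "1 \<le> m" "m \<le> length \<sigma>"
    using first_visit_spec(1,2)[of u \<sigma>] u unfolding m_def by auto
  have "take m \<sigma> = take (m - 1) \<sigma> @ [\<sigma> ! (m - 1)]"
    using m take_Suc_conv_app_nth[of "m - 1" \<sigma>] by simp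
  then have "visited r \<sigma> m = visited r \<sigma> (m - 1) \<union> \<sigma> ! (m - 1)"
    unfolding visited_def by auto
  moreover have "u \<in> \<sigma> ! (m - 1)" "v \<in> \<sigma> ! (m - 1)"
    using first_visit_spec(3)[of u \<sigma>] first_visit_spec(3)[of v \<sigma>] u v same unfolding m_def by auto
  ultimately have "insert u (insert v (visited r \<sigma> (m - 1))) \<subseteq> visited r \<sigma> m"
    by auto
  then have "card (insert u (insert v (visited r \<sigma> (m - 1)))) \<le> m + 1"
    using card_mono[OF finite_visited[OF pattern m(2)]] card_visited[OF pattern m(2)] by simp
  moreover have "u \<notin> visited r \<sigma> (m - 1)" "v \<notin> visited r \<sigma> (m - 1)"
    using first_visit_spec(4)[of u \<sigma>] first_visit_spec(4)[of v \<sigma>] u v same unfolding m_def visited_def by auto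
  moreover have "card (visited r \<sigma> (m - 1)) = m" "finite (visited r \<sigma> (m - 1))"
    using card_visited[OF pattern] finite_visited[OF pattern] m by auto
  ultimately show "u = v"
    by (cases "u = v") auto
qed

lemma first_visit_image:
  assumes pattern: "expanding_pattern E r \<sigma>"
  shows "first_visit \<sigma> ` (\<Union>(set \<sigma>) - {r}) = {1..length \<sigma>}"
proof (rule card_subset_eq)
  show "first_visit \<sigma> ` (\<Union>(set \<sigma>) - {r}) \<subseteq> {1..length \<sigma>}"
  proof (rule image_subsetI)
    fix v assume "v \<in> \<Union>(set \<sigma>) - {r}"
    then show "first_visit \<sigma> v \<in> {1..length \<sigma>}"
      using first_visit_spec(1,2)[of v \<sigma>] by simp
  qed
  have "card (\<Union>(set \<sigma>) - {r}) = card (visited r \<sigma> (length \<sigma>) - {r})"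
    unfolding visited_def by simp
  also have "\<dots> = card (visited r \<sigma> (length \<sigma>)) - 1"
    by (rule card_Diff_singleton) (simp add: visited_def)
  also have "\<dots> = length \<sigma>"
    using card_visited[OF pattern order_refl] by simp
  finally have "card (\<Union>(set \<sigma>) - {r}) = length \<sigma>" .
  then show "card (first_visit \<sigma> ` (\<Union>(set \<sigma>) - {r})) = card {1..length \<sigma>}"
    using card_image[OF inj_on_first_visit[OF pattern]] by simp
qed simp

lemma total_latency_eq_sum_prefix_length:
  assumes graph: "simple_graph V E" and root: "r \<in> V" and feasible: "feasible_pattern V E r \<sigma>"
  shows "total_latency V len r \<sigma> = (\<Sum>m = 1..length \<sigma>. prefix_length len \<sigma> m)"
proof -
  have pattern: "expanding_pattern E r \<sigma>"
    using feasible unfolding feasible_pattern_def by simp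
  have "V - {r} = \<Union>(set \<sigma>) - {r}"
    using visited_feasible_pattern[OF assms] unfolding visited_def by auto
  have "total_latency V len r \<sigma> = (\<Sum>v\<in>V - {r}. vertex_latency len r \<sigma> v)"
    unfolding total_latency_def using root graph
    by (simp add: sum.remove[of V r] simple_graph_def vertex_latency_def)
  also have "\<dots> = (\<Sum>v\<in>\<Union>(set \<sigma>) - {r}. prefix_length len \<sigma> (first_visit \<sigma> v))"
    unfolding \<open>V - {r} = \<Union>(set \<sigma>) - {r}\<close>
    by (intro sum.cong refl) (simp add: vertex_latency_eq_prefix_length)
  also have "\<dots> = (\<Sum>m\<in>first_visit \<sigma> ` (\<Union>(set \<sigma>) - {r}). prefix_length len \<sigma> m)"
    using inj_on_first_visit[OF pattern] by (simp add: sum.reindex)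
  also have "\<dots> = (\<Sum>m = 1..length \<sigma>. prefix_length len \<sigma> m)"
    using first_visit_image[OF pattern] by simp
  finally show ?thesis .
qed

lemma finite_feasible_patterns:
  assumes graph: "simple_graph V E"
  shows "finite {\<sigma>. feasible_pattern V E r \<sigma>}"
proof -
  have "set \<sigma> \<subseteq> E \<and> length \<sigma> \<le> card E" if "feasible_pattern V E r \<sigma>" for \<sigma>
  proof -
    have pattern: "expanding_pattern E r \<sigma>"
      using that unfolding feasible_pattern_def by simp
    then have "length \<sigma> = card (set \<sigma>)"
      using expanding_patternD(2)[OF pattern] by (simp add: distinct_card)
    also have "\<dots> \<le> card E"
      using expanding_patternD(1)[OF pattern] finite_edges[OF graph] by (rule card_mono[rotated])
    finally show ?thesis
      using expanding_patternD(1)[OF pattern] by simp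
  qed
  then show ?thesis
    by (intro finite_subset[OF _ finite_lists_length_le[OF finite_edges[OF graph]]]) auto
qed

lemma opt_latency_attained:
  assumes graph: "simple_graph V E" and root: "r \<in> V" and conn: "connected_on V E"
  shows "\<exists>\<sigma>. feasible_pattern V E r \<sigma> \<and> total_latency V len r \<sigma> = opt_latency V E len r"
proof -
  let ?L = "{total_latency V len r \<sigma> | \<sigma>. feasible_pattern V E r \<sigma>}"
  have "finite ?L"
    using finite_feasible_patterns[OF graph] by (simp add: setcompr_eq_image)
  moreover have "?L \<noteq> {}"
    using exists_feasible_pattern[OF assms] by simp
  ultimately have "Min ?L \<in> ?L"
    by (rule Min_in)
  then show ?thesis
    unfolding opt_latency_def by auto
qed

lemma prefix_length_pos_feasible:
  assumes graph: "simple_graph V E" and root: "r \<in> V" and feasible: "feasible_pattern V E r \<sigma>"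
    and pos: "\<forall>e\<in>E. len e > 0" and k: "2 \<le> k" "k \<le> card V"
  shows "0 < prefix_length len \<sigma> (k - 1)"
proof -
  have "\<sigma> \<noteq> []"
    using length_feasible_pattern[OF graph root feasible] k by auto
  moreover have "0 < len (hd \<sigma>)"
    using pos feasible hd_in_set[OF \<open>\<sigma> \<noteq> []\<close>]
    unfolding feasible_pattern_def expanding_pattern_def by auto
  ultimately show ?thesis
    using prefix_length_pos[of \<sigma> len "k - 1"] k by simp
qed

lemma sum_prefix_length_eq_total_latency:
  assumes graph: "simple_graph V E" and root: "r \<in> V" and feasible: "feasible_pattern V E r \<sigma>"
  shows "(\<Sum>k\<in>{2..card V}. prefix_length len \<sigma> (k - 1)) = total_latency V len r \<sigma>"
proof -
  have "0 < card V"
    using root graph by (auto simp: simple_graph_def card_gt_0_iff)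
  then have "card V = Suc (length \<sigma>)"
    using length_feasible_pattern[OF assms] by simp
  then have "(\<Sum>k\<in>{2..card V}. prefix_length len \<sigma> (k - 1)) = (\<Sum>m = 1..length \<sigma>. prefix_length len \<sigma> m)"
    using sum.shift_bounds_cl_Suc_ivl[of "\<lambda>k. prefix_length len \<sigma> (k - 1)" 1 "length \<sigma>"]
    by (simp add: numeral_2_eq_2)
  then show ?thesis
    using total_latency_eq_sum_prefix_length[OF assms] by simp
qed

lemma approx_le_prefix_length:
  assumes graph: "simple_graph V E" and root: "r \<in> V" and feasible: "feasible_pattern V E r \<sigma>"
    and approx: "\<forall>k\<in>{1..card V}. \<tau> k \<le> \<alpha> * kmst_opt V E r len k"
    and j: "1 \<le> j" "j \<le> card V"
  shows "\<tau> j \<le> \<alpha> * prefix_length len \<sigma> (j - 1)"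
proof -
  have "\<tau> j \<le> \<alpha> * kmst_opt V E r len j"
    using approx j by simp
  also have "\<dots> \<le> \<alpha> * prefix_length len \<sigma> (j - 1)"
    using kmst_opt_le_prefix_length[OF graph root feasible j] by simp
  finally show ?thesis .
qed

lemma shortest_H_path_le_total_latency:
  fixes \<tau> :: "nat \<Rightarrow> nat"
  assumes graph: "simple_graph V E" and root: "r \<in> V" and feasible: "feasible_pattern V E r \<sigma>"
    and pos: "\<forall>e\<in>E. len e > 0"
    and approx: "\<forall>k\<in>{1..card V}. \<tau> k \<le> \<alpha> * kmst_opt V E r len k" and "0 < \<alpha>"
    and "0 < N"
  shows "real (shortest_H_path (card V) (\<lambda>i j. (card V - i) * \<tau> j))
    \<le> exp (1 + 1 / real N) * (real \<alpha> * real (total_latency V len r \<sigma>))"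
proof -
  let ?n = "card V" and ?c = "\<lambda>i j. (card V - i) * \<tau> j"
  define t where "t k = real \<alpha> * real (prefix_length len \<sigma> (k - 1))" for k
  have "\<exists>ps. H_path ?n ps
      \<and> real (H_path_cost ?c ps) \<le> exp (1 + 1 / real N) * (\<Sum>k\<in>{2..?n}. t k)"
  proof (rule exists_H_path_cost_le)
    show "1 \<le> ?n"
      using root graph by (auto simp: simple_graph_def Suc_le_eq card_gt_0_iff)
    show "t i \<le> t j" if "i \<le> j" for i j
      using prefix_length_mono[of "i - 1" "j - 1" len \<sigma>] that by (simp add: t_def mult_left_mono)
    show "0 < t k" if "2 \<le> k" "k \<le> ?n" for k
      using prefix_length_pos_feasible[OF graph root feasible pos that] \<open>0 < \<alpha>\<close> by (simp add: t_def)
    show "real (?c i j) \<le> real (?n - i) * t j" if "1 \<le> i" "i < j" "j \<le> ?n" for i j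
    proof -
      have "?c i j \<le> (?n - i) * (\<alpha> * prefix_length len \<sigma> (j - 1))"
        using approx_le_prefix_length[OF graph root feasible approx, of j] that by simp
      then show ?thesis
        unfolding t_def by (metis of_nat_le_iff of_nat_mult)
    qed
  qed fact
  then obtain ps where "H_path ?n ps"
    and cost: "real (H_path_cost ?c ps) \<le> exp (1 + 1 / real N) * (\<Sum>k\<in>{2..?n}. t k)"
    by blast
  have "real (shortest_H_path ?n ?c) \<le> real (H_path_cost ?c ps)"
    using shortest_H_path_le[OF \<open>H_path ?n ps\<close>] by (simp only: of_nat_le_iff)
  also note cost
  also have "(\<Sum>k\<in>{2..?n}. t k) = real \<alpha> * real (total_latency V len r \<sigma>)"
    using sum_prefix_length_eq_total_latency[OF graph root feasible, of len]
    by (simp add: t_def flip: sum_distrib_left of_nat_sum)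
  finally show ?thesis .
qed

theorem lemma3:
  fixes V :: "'a set" and E :: "'a set set" and r :: 'a
    and len :: "'a set \<Rightarrow> nat" and T :: "nat \<Rightarrow> 'a set \<times> 'a set set"
  assumes graph: "simple_graph V E"
    and root: "r \<in> V"
    and conn: "connected_on V E"
    and pos: "\<forall>e\<in>E. len e > 0"
    and T_subtree: "\<forall>k\<in>{1..card V}. rooted_subtree V E r (fst (T k)) (snd (T k)) \<and> card (fst (T k)) = k"
    and T_approx: "\<forall>k\<in>{1..card V}. tree_length len (snd (T k)) \<le> 2 * kmst_opt V E r len k"
    and T_1: "T 1 = ({r}, {})"
  shows "real (shortest_H_path (card V) (\<lambda>i j. (card V - i) * tree_length len (snd (T j))))
           \<le> 2 * exp 1 * real (opt_latency V E len r)"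
proof -
  obtain \<sigma> where feasible: "feasible_pattern V E r \<sigma>"
    and opt: "total_latency V len r \<sigma> = opt_latency V E len r"
    using opt_latency_attained[OF graph root conn] by blast
  let ?S = "real (shortest_H_path (card V) (\<lambda>i j. (card V - i) * tree_length len (snd (T j))))"
  have "?S \<le> exp 1 * (2 * real (opt_latency V E len r))"
  proof (rule le_exp_one_mult_if_le_for_all_N)
    fix N :: nat assume "0 < N"
    then show "?S \<le> exp (1 + 1 / real N) * (2 * real (opt_latency V E len r))"
      using shortest_H_path_le_total_latency[OF graph root feasible pos T_approx zero_less_numeral] opt
      by simp
  qed
  then show ?thesis
    by (simp add: mult_ac)
qed

end
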